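(* For every integer $n\ge0$, all zeroes of the function $\alpha_n(x)$ are real, distinct and strictly greater than $2$.
   Context: For $x\in\mathbb{R}\setminus\{0\}$ the functions $\alpha_k(x)$, $k\ge0$, are defined as the coefficients of the power series expansion in $z$ $$\frac{\sinh(z)}{\cosh(z)-1+x}=\sum_{k=0}^\infty\alpha_k(x)z^{2k+1}.$$ (For instance $\alpha_0(x)=1/x$; each $\alpha_n(x)$ is of the form $P_n(x)/((2n+1)!\,x^{n+1})$ with $P_n$ a polynomial of degree $n$.) *)

theory Defs
  imports "HOL-Complex_Analysis.Complex_Analysis"
begin

text \<open>The value for x = 0 is irrelevant junk.\<close>
definition alpha :: "nat \<Rightarrow> complex \<Rightarrow> complex" where
  "alpha k x = (deriv ^^ (2 * k + 1)) (\<lambda>z. sinh z / (cosh z - 1 + x)) 0 / fact (2 * k + 1)"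

end

theory Submission
  imports Defs "HOL-Computational_Algebra.Polynomial"
begin

text \<open>Write \<open>T\<^sup>2 = 1 - 2 / x\<close> and \<open>tanh c = T\<close>. Then
  \<open>sinh z / (cosh z - 1 + x) = (tanh (z/2 + c) + tanh (z/2 - c)) / 2\<close>, and since
  \<open>tanh' = 1 - tanh\<^sup>2\<close>, the \<open>m\<close>-th derivative of \<open>tanh\<close> is \<open>P\<^sub>m (tanh)\<close> for the polynomials
  \<open>P\<^sub>0 = X\<close>, \<open>P\<^sub>m\<^sub>+\<^sub>1 = P\<^sub>m' (1 - X\<^sup>2)\<close>. Hence \<open>alpha n x\<close> is a nonzero multiple of
  \<open>P\<^sub>2\<^sub>n\<^sub>+\<^sub>1 (T)\<close>. By Rolle's theorem \<open>P\<^sub>m\<^sub>+\<^sub>1\<close> vanishes at \<open>\<plusminus>1\<close> and at \<open>m\<close> points of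
  \<open>(-1, 1)\<close>, so \<open>P\<^sub>m\<close> has \<open>m + 1 = deg P\<^sub>m\<close> distinct roots in \<open>[-1, 1]\<close>: all its roots are
  real and simple. As \<open>P\<^sub>2\<^sub>n\<^sub>+\<^sub>1\<close> is even, \<open>0\<close> is not one of them. So a zero \<open>x\<close> of
  \<open>alpha n\<close> comes from a real \<open>T\<close> with \<open>0 < T\<^sup>2 < 1\<close>, i.e. \<open>x = 2 / (1 - T\<^sup>2) > 2\<close>,
  and the zero is simple because \<open>T\<close> is a simple root of \<open>P\<^sub>2\<^sub>n\<^sub>+\<^sub>1\<close>.\<close>

fun tanh_deriv_poly :: "nat \<Rightarrow> 'a::idom poly" where
  "tanh_deriv_poly 0 = [:0, 1:]"
| "tanh_deriv_poly (Suc m) = pderiv (tanh_deriv_poly m) * [:1, 0, -1:]"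

lemma poly_tanh_deriv_poly_Suc:
  "poly (tanh_deriv_poly (Suc m)) c = poly (pderiv (tanh_deriv_poly m)) c * (1 - c\<^sup>2)"
  by (simp add: power2_eq_square algebra_simps)

declare tanh_deriv_poly.simps(2) [simp del]

lemma degree_tanh_deriv_poly:
  "degree (tanh_deriv_poly m :: 'a::{idom,ring_char_0} poly) = Suc m"
proof (induction m)
  case (Suc m)
  then have "pderiv (tanh_deriv_poly m :: 'a poly) \<noteq> 0"
    by (simp add: pderiv_eq_0_iff)
  then have "degree (pderiv (tanh_deriv_poly m) * [:1, 0, -1::'a:]) = Suc (Suc m)"
    using Suc by (subst degree_mult_eq) (auto simp: degree_pderiv)
  then show ?case
    by (simp only: tanh_deriv_poly.simps(2))
qed simp

lemma map_poly_of_real_mult: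
  "map_poly (of_real :: real \<Rightarrow> 'a::{real_algebra_1,idom}) (p * q) =
     map_poly of_real p * map_poly of_real q"
  by (intro poly_eqI) (simp add: coeff_map_poly coeff_mult)

lemma map_poly_of_real_pderiv:
  "map_poly (of_real :: real \<Rightarrow> 'a::{real_algebra_1,idom}) (pderiv p) = pderiv (map_poly of_real p)"
  by (intro poly_eqI) (simp add: coeff_map_poly coeff_pderiv)

lemma map_poly_of_real_tanh_deriv_poly:
  "map_poly (of_real :: real \<Rightarrow> 'a::{real_algebra_1,idom}) (tanh_deriv_poly m) = tanh_deriv_poly m"
proof (induction m)
  case (Suc m)
  have "map_poly (of_real :: real \<Rightarrow> 'a) [:1, 0, -1:] = [:1, 0, -1:]"
    by (simp add: map_poly_pCons)
  with Suc show ?case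
    by (simp only: tanh_deriv_poly.simps(2) map_poly_of_real_mult map_poly_of_real_pderiv)
qed (simp add: map_poly_pCons)

lemma poly_tanh_deriv_poly_of_real:
  "poly (tanh_deriv_poly m) (of_real t :: 'a::{real_algebra_1,idom}) = of_real (poly (tanh_deriv_poly m) t)"
proof -
  have "poly (map_poly (of_real :: real \<Rightarrow> 'a) p) (of_real t) = of_real (poly p t)" for p
    by (induction p) (auto simp: map_poly_pCons)
  then show ?thesis
    by (metis map_poly_of_real_tanh_deriv_poly)
qed

lemma pcompose_tanh_deriv_poly_reflect:
  "pcompose (tanh_deriv_poly m :: 'a::idom poly) [:0, -1:] = smult ((-1) ^ Suc m) (tanh_deriv_poly m)"
proof (induction m)
  case (Suc m)
  have "pcompose (pderiv (tanh_deriv_poly m :: 'a poly)) [:0, -1:]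
      = - pderiv (pcompose (tanh_deriv_poly m) [:0, -1:])"
    by (simp add: pderiv_pcompose pderiv_pCons)
  also have "\<dots> = smult ((-1) ^ Suc (Suc m)) (pderiv (tanh_deriv_poly m))"
    unfolding Suc by (simp add: pderiv_smult pderiv_minus)
  finally have "pcompose (pderiv (tanh_deriv_poly m :: 'a poly)) [:0, -1:]
      = smult ((-1) ^ Suc (Suc m)) (pderiv (tanh_deriv_poly m))" .
  moreover have "pcompose [:1, 0, -1::'a:] [:0, -1:] = [:1, 0, -1:]"
    by (simp add: pcompose_pCons)
  ultimately show ?case
    by (simp only: tanh_deriv_poly.simps(2) pcompose_mult mult_smult_left)
qed (simp add: pcompose_pCons)

lemma poly_tanh_deriv_poly_minus:
  "poly (tanh_deriv_poly m :: 'a::idom poly) (- c) = (-1) ^ Suc m * poly (tanh_deriv_poly m) c"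
  using arg_cong[OF pcompose_tanh_deriv_poly_reflect, of "\<lambda>p. poly p c" m]
  by (simp add: poly_pcompose)

lemma poly_pderiv_0_if_even:
  fixes p :: "'a::{idom,ring_char_0} poly"
  assumes "pcompose p [:0, -1:] = p"
  shows "poly (pderiv p) 0 = 0"
proof -
  have "poly (pderiv (pcompose p [:0, -1:])) 0 = - poly (pderiv p) 0"
    by (simp add: pderiv_pcompose pderiv_pCons poly_pcompose)
  then show ?thesis
    using assms by simp
qed

lemma poly_Rolle:
  fixes p :: "real poly"
  assumes "a < b" "poly p a = 0" "poly p b = 0"
  obtains c where "a < c" "c < b" "poly (pderiv p) c = 0"
proof -
  have "continuous_on {a..b} (poly p)"
    by (intro continuous_intros)
  then obtain c where "a < c" "c < b" "(\<lambda>h. poly (pderiv p) c * h) = (\<lambda>h. 0)"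
    using Rolle_deriv[of a b "poly p" "\<lambda>x h. poly (pderiv p) x * h"] assms
    by (auto simp: poly_DERIV[THEN has_field_derivative_imp_has_derivative])
  then show ?thesis
    using that by (metis mult_cancel_left1)
qed

lemma pderiv_roots_between:
  fixes p :: "real poly"
  assumes "finite A" "card A = Suc k" "\<forall>a\<in>A. poly p a = 0"
  obtains B where "finite B" "card B = k" "B \<subseteq> {Min A<..<Max A}" "\<forall>b\<in>B. poly (pderiv p) b = 0"
proof -
  have "\<exists>B. finite B \<and> card B = k \<and> B \<subseteq> {Min A<..<Max A} \<and> (\<forall>b\<in>B. poly (pderiv p) b = 0)"
    using assms
  proof (induction k arbitrary: A)
    case 0
    then show ?case
      by (intro exI[of _ "{}"]) auto
  next
    case (Suc k)
    define a where "a = Max A"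
    define A' where "A' = A - {a}"
    have "A \<noteq> {}"
      using Suc.prems by auto
    then have "a \<in> A"
      using Suc.prems(1) by (simp add: a_def)
    then have A': "finite A'" "card A' = Suc k" "A' \<subseteq> A"
      using Suc.prems by (auto simp: A'_def)
    then have "A' \<noteq> {}"
      by auto
    have "\<forall>a\<in>A'. poly p a = 0"
      using A'(3) Suc.prems(3) by blast
    then obtain B' where B': "finite B'" "card B' = k" "B' \<subseteq> {Min A'<..<Max A'}"
        "\<forall>b\<in>B'. poly (pderiv p) b = 0"
      using Suc.IH[OF A'(1,2)] by blast
    have "Max A' \<in> A'"
      using A' \<open>A' \<noteq> {}\<close> by simp
    moreover have "Max A' \<le> a"
      unfolding a_def using A' \<open>A' \<noteq> {}\<close> Suc.prems(1) by (intro Max_mono)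
    ultimately have "Max A' < a"
      by (auto simp: A'_def)
    then obtain c where c: "Max A' < c" "c < a" "poly (pderiv p) c = 0"
      using poly_Rolle[of "Max A'" a p] \<open>Max A' \<in> A'\<close> \<open>a \<in> A\<close> \<open>\<forall>a\<in>A'. poly p a = 0\<close> Suc.prems(3)
      by blast
    have "Min A \<le> Min A'" "Min A' \<le> Max A'"
      using A' \<open>A' \<noteq> {}\<close> Suc.prems(1) by (auto intro: Min_antimono)
    then have "insert c B' \<subseteq> {Min A<..<Max A}"
      using B'(3) c \<open>Max A' < a\<close> unfolding a_def by (auto simp: subset_eq)
    moreover have "c \<notin> B'"
      using B'(3) c(1) by auto
    ultimately show ?case
      using B' c by (intro exI[of _ "insert c B'"]) auto
  qed
  then show ?thesis
    using that by blast
qed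

lemma tanh_deriv_poly_real_roots:
  "\<exists>A. finite A \<and> card A = Suc m \<and> A \<subseteq> {-1..1} \<and> (\<forall>a\<in>A. poly (tanh_deriv_poly m :: real poly) a = 0)"
proof (induction m)
  case 0
  show ?case
    by (intro exI[of _ "{0}"]) simp
next
  case (Suc m)
  then obtain A :: "real set" where A: "finite A" "card A = Suc m" "A \<subseteq> {-1..1}"
      "\<forall>a\<in>A. poly (tanh_deriv_poly m) a = 0"
    by blast
  then obtain B where B: "finite B" "card B = m" "B \<subseteq> {Min A<..<Max A}"
      "\<forall>b\<in>B. poly (pderiv (tanh_deriv_poly m)) b = 0"
    using pderiv_roots_between[OF A(1,2,4)] by blast
  have "A \<noteq> {}"
    using A(2) by auto
  then have "Min A \<in> {-1..1}" "Max A \<in> {-1..1}"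
    using A(1,3) by (simp_all add: subset_eq)
  then have "B \<subseteq> {-1<..<1}"
    using B(3) by (fastforce simp: subset_eq)
  then have "-1 \<notin> B" "1 \<notin> B"
    by (auto simp: subset_eq)
  then have "card (insert (-1) (insert 1 B)) = Suc (Suc m)"
    using B(1,2) by simp
  moreover have "insert (-1) (insert 1 B) \<subseteq> {-1..1}"
    using \<open>B \<subseteq> {-1<..<1}\<close> by auto
  moreover have "\<forall>a\<in>insert (-1) (insert 1 B). poly (tanh_deriv_poly (Suc m)) a = 0"
    using B(4) by (simp add: poly_tanh_deriv_poly_Suc)
  ultimately show ?case
    using B(1) by (intro exI[of _ "insert (-1) (insert 1 B)"]) simp
qed

lemma rsquarefree_if_card_roots_eq_degree:
  fixes p :: "'a::idom poly"
  assumes "p \<noteq> 0" "A \<subseteq> {x. poly p x = 0}" "card A = degree p"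
  shows "{x. poly p x = 0} = A" and "rsquarefree p"
proof -
  let ?R = "{x. poly p x = 0}"
  have "finite ?R"
    using assms(1) by (rule poly_roots_finite)
  moreover have "card ?R \<le> degree p"
    using assms(1) by (rule card_poly_roots_bound)
  ultimately show R: "?R = A"
    using card_seteq[of ?R A] assms(2,3) by simp
  have "order a p = 1" if "poly p a = 0" for a
  proof (rule ccontr)
    assume "order a p \<noteq> 1"
    moreover have "order a p \<noteq> 0"
      using that assms(1) by (simp add: order_root)
    ultimately have "1 < order a p"
      by linarith
    then have "(\<Sum>x\<in>?R. 1) < (\<Sum>x\<in>?R. order x p)"
      using \<open>finite ?R\<close> that assms(1)
      by (intro sum_strict_mono_ex1) (auto simp: Suc_le_eq order_root intro!: exI[of _ a])
    also have "\<dots> \<le> degree p"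
      using assms(1) by (rule sum_order_le_degree)
    finally show False
      using R assms(3) by simp
  qed
  then show "rsquarefree p"
    using assms(1) by (auto simp: rsquarefree_def order_root)
qed

lemma tanh_deriv_poly_complex_roots:
  fixes z :: complex
  assumes "poly (tanh_deriv_poly m) z = 0"
  shows "z \<in> \<real>" "\<bar>Re z\<bar> \<le> 1" "poly (pderiv (tanh_deriv_poly m)) z \<noteq> 0"
proof -
  obtain A :: "real set" where A: "finite A" "card A = Suc m" "A \<subseteq> {-1..1}"
      "\<forall>a\<in>A. poly (tanh_deriv_poly m) a = 0"
    using tanh_deriv_poly_real_roots by blast
  have nz: "(tanh_deriv_poly m :: complex poly) \<noteq> 0"
    using degree_tanh_deriv_poly[of m] by (metis degree_0 nat.distinct(1))
  have sub: "of_real ` A \<subseteq> {x. poly (tanh_deriv_poly m) x = (0::complex)}"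
    using A(4) by (auto simp: poly_tanh_deriv_poly_of_real)
  have card: "card (of_real ` A :: complex set) = degree (tanh_deriv_poly m :: complex poly)"
    using A(2) by (simp add: card_image inj_on_def degree_tanh_deriv_poly)
  note roots = rsquarefree_if_card_roots_eq_degree[OF nz sub card]
  have "z \<in> of_real ` A"
    using assms roots(1) by (simp add: set_eq_iff)
  then obtain r where "z = of_real r" "r \<in> A"
    by blast
  then show "z \<in> \<real>" "\<bar>Re z\<bar> \<le> 1"
    using A(3) by (auto simp: abs_le_iff subset_eq)
  show "poly (pderiv (tanh_deriv_poly m)) z \<noteq> 0"
    using assms roots(2) by (simp add: rsquarefree_roots)
qed

lemma poly_tanh_deriv_poly_0_nonzero:
  assumes "odd m"
  shows "poly (tanh_deriv_poly m) (0::complex) \<noteq> 0"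
proof
  assume "poly (tanh_deriv_poly m) (0::complex) = 0"
  moreover have "pcompose (tanh_deriv_poly m :: complex poly) [:0, -1:] = tanh_deriv_poly m"
    using assms by (simp add: pcompose_tanh_deriv_poly_reflect)
  then have "poly (pderiv (tanh_deriv_poly m)) (0::complex) = 0"
    by (rule poly_pderiv_0_if_even)
  ultimately show False
    using tanh_deriv_poly_complex_roots(3) by blast
qed

text \<open>\<open>exp_moebius (T + 1) (T - 1) z = tanh (z/2 + c)\<close> when \<open>tanh c = T\<close>; the
  exponential form avoids choosing a branch of \<open>artanh\<close>.\<close>

definition exp_moebius :: "complex \<Rightarrow> complex \<Rightarrow> complex \<Rightarrow> complex" where
  "exp_moebius a b z = (a * exp z + b) / (a * exp z - b)"

lemma has_field_derivative_exp_moebius: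
  assumes "a * exp z \<noteq> b"
  shows "(exp_moebius a b has_field_derivative (1 - (exp_moebius a b z)\<^sup>2) / 2) (at z)"
proof -
  define w where "w = a * exp z"
  have "w - b \<noteq> 0"
    using assms by (simp add: w_def)
  have "1 - ((w + b) / (w - b))\<^sup>2 = ((w - b)\<^sup>2 - (w + b)\<^sup>2) / (w - b)\<^sup>2"
    using \<open>w - b \<noteq> 0\<close> by (simp add: field_simps)
  also have "(w - b)\<^sup>2 - (w + b)\<^sup>2 = 2 * (w * (w - b) - (w + b) * w)"
    by (simp add: algebra_simps power2_eq_square)
  finally have eq: "(w * (w - b) - (w + b) * w) / (w - b)\<^sup>2 = (1 - ((w + b) / (w - b))\<^sup>2) / 2"
    using \<open>w - b \<noteq> 0\<close> by (simp add: field_simps)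
  have "(exp_moebius a b has_field_derivative (w * (w - b) - (w + b) * w) / (w - b)\<^sup>2) (at z)"
    unfolding exp_moebius_def w_def using assms
    by (auto intro!: derivative_eq_intros simp: power2_eq_square)
  then show ?thesis
    unfolding eq unfolding exp_moebius_def w_def .
qed

lemma higher_deriv_tanh_deriv_poly:
  fixes C :: "complex \<Rightarrow> complex"
  assumes "open S"
    and C': "\<And>z. z \<in> S \<Longrightarrow> (C has_field_derivative (1 - (C z)\<^sup>2) / 2) (at z)"
    and "z \<in> S"
  shows "(deriv ^^ m) C z = (1/2) ^ m * poly (tanh_deriv_poly m) (C z)"
  using \<open>z \<in> S\<close>
proof (induction m arbitrary: z)
  case (Suc m)
  have "((\<lambda>y. (1/2) ^ m * poly (tanh_deriv_poly m) (C y)) has_field_derivative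
      (1/2) ^ m * (poly (pderiv (tanh_deriv_poly m)) (C z) * ((1 - (C z)\<^sup>2) / 2))) (at z)"
    by (intro DERIV_cmult DERIV_chain2[OF poly_DERIV] C' Suc.prems)
  also have "(1/2) ^ m * (poly (pderiv (tanh_deriv_poly m)) (C z) * ((1 - (C z)\<^sup>2) / 2))
      = (1/2) ^ Suc m * poly (tanh_deriv_poly (Suc m)) (C z)"
    by (simp add: poly_tanh_deriv_poly_Suc)
  finally have "((deriv ^^ m) C has_field_derivative
      (1/2) ^ Suc m * poly (tanh_deriv_poly (Suc m)) (C z)) (at z)"
    using Suc \<open>open S\<close> by (elim has_field_derivative_transform_within_open) auto
  then show ?case
    by (simp add: DERIV_imp_deriv)
qed simp

lemma eq_two_div_one_minus_square:
  fixes x t :: "'a::field_char_0"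
  assumes "t\<^sup>2 = 1 - 2 / x" and "x \<noteq> 0"
  shows "x = 2 / (1 - t\<^sup>2)"
proof -
  have "x * (1 - t\<^sup>2) = 2"
    using assms by (simp add: right_diff_distrib)
  moreover have "1 - t\<^sup>2 \<noteq> 0"
    using assms by simp
  ultimately show ?thesis
    by (simp add: eq_divide_eq)
qed

lemma sinh_ratio_eq_exp_moebius:
  fixes x T z :: complex
  assumes T: "T\<^sup>2 = 1 - 2 / x" and "x \<noteq> 0"
    and "(T + 1) * exp z \<noteq> T - 1" and "(T - 1) * exp z \<noteq> T + 1"
  shows "sinh z / (cosh z - 1 + x) = (exp_moebius (T + 1) (T - 1) z + exp_moebius (T - 1) (T + 1) z) / 2"
proof -
  define E where "E = exp z"
  define N1 D1 N2 D2
    where "N1 = (T + 1) * E + (T - 1)" and "D1 = (T + 1) * E - (T - 1)"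
      and "N2 = (T - 1) * E + (T + 1)" and "D2 = (T - 1) * E - (T + 1)"
  have "E \<noteq> 0"
    by (simp add: E_def)
  have "T\<^sup>2 - 1 \<noteq> 0"
    using T \<open>x \<noteq> 0\<close> by simp
  have x: "x = 2 / (1 - T\<^sup>2)"
    using T \<open>x \<noteq> 0\<close> by (rule eq_two_div_one_minus_square)
  have sinh: "sinh z = (E - inverse E) / 2" and cosh: "cosh z = (E + inverse E) / 2"
    by (simp_all add: sinh_def cosh_def E_def exp_minus scaleR_conv_of_real field_simps)
  have "D1 \<noteq> 0" "D2 \<noteq> 0"
    using assms(3,4) by (simp_all add: D1_def D2_def E_def)
  have prod: "D1 * D2 = ((T\<^sup>2 - 1) * (2 * E)) * (cosh z - 1 + x)"
    using \<open>E \<noteq> 0\<close> \<open>T\<^sup>2 - 1 \<noteq> 0\<close> unfolding D1_def D2_def cosh x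
    by (simp add: field_simps power2_eq_square)
  have sum: "N1 * D2 + N2 * D1 = ((T\<^sup>2 - 1) * (2 * E)) * (E - inverse E)"
    using \<open>E \<noteq> 0\<close> unfolding N1_def N2_def D1_def D2_def
    by (simp add: field_simps power2_eq_square)
  have "(exp_moebius (T + 1) (T - 1) z + exp_moebius (T - 1) (T + 1) z) / 2
      = (N1 * D2 + N2 * D1) / (D1 * D2) / 2"
    using \<open>D1 \<noteq> 0\<close> \<open>D2 \<noteq> 0\<close>
    by (simp add: exp_moebius_def N1_def N2_def D1_def D2_def E_def add_frac_eq)
  also have "\<dots> = (E - inverse E) / (cosh z - 1 + x) / 2"
    unfolding prod sum using \<open>E \<noteq> 0\<close> \<open>T\<^sup>2 - 1 \<noteq> 0\<close> by simp
  also have "\<dots> = sinh z / (cosh z - 1 + x)"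
    unfolding sinh by simp
  finally show ?thesis
    by (rule sym)
qed

lemma higher_deriv_sinh_ratio_0:
  fixes x T :: complex
  assumes T: "T\<^sup>2 = 1 - 2 / x" and "x \<noteq> 0"
  shows "(deriv ^^ m) (\<lambda>z. sinh z / (cosh z - 1 + x)) 0
    = (1/2) ^ Suc m * (poly (tanh_deriv_poly m) T + poly (tanh_deriv_poly m) (- T))"
proof -
  define S where "S = {z. (T + 1) * exp z \<noteq> T - 1} \<inter> {z. (T - 1) * exp z \<noteq> T + 1}"
  define C1 C2 where "C1 = exp_moebius (T + 1) (T - 1)" and "C2 = exp_moebius (T - 1) (T + 1)"
  have "open S"
    unfolding S_def by (intro open_Int open_Collect_neq continuous_intros)
  have "0 \<in> S"
    by (simp add: S_def)
  have C0: "C1 0 = T" "C2 0 = - T"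
    by (simp_all add: C1_def C2_def exp_moebius_def minus_divide_right[symmetric])
  have C1': "(C1 has_field_derivative (1 - (C1 z)\<^sup>2) / 2) (at z)"
    and C2': "(C2 has_field_derivative (1 - (C2 z)\<^sup>2) / 2) (at z)" if "z \<in> S" for z
    using that unfolding C1_def C2_def S_def by (auto intro!: has_field_derivative_exp_moebius)
  have "C1 holomorphic_on S" "C2 holomorphic_on S"
    using C1' C2' \<open>open S\<close> by (auto simp: holomorphic_on_open)
  then have hol: "(\<lambda>z. 1/2 * (C1 z + C2 z)) holomorphic_on S"
    by (intro holomorphic_intros)
  have split: "1/2 * (C1 z + C2 z) = sinh z / (cosh z - 1 + x)" if "z \<in> S" for z
    using sinh_ratio_eq_exp_moebius[OF assms] that by (simp add: S_def C1_def C2_def)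
  have "(deriv ^^ m) (\<lambda>z. sinh z / (cosh z - 1 + x)) 0 = (deriv ^^ m) (\<lambda>z. 1/2 * (C1 z + C2 z)) 0"
    using hol holomorphic_transform[OF hol split] \<open>open S\<close> \<open>0 \<in> S\<close> split
    by (intro higher_deriv_transform_within_open[where S = S]) auto
  also have "\<dots> = 1/2 * (deriv ^^ m) (\<lambda>z. C1 z + C2 z) 0"
    using \<open>C1 holomorphic_on S\<close> \<open>C2 holomorphic_on S\<close> \<open>open S\<close> \<open>0 \<in> S\<close>
    by (intro higher_deriv_cmult holomorphic_intros)
  also have "\<dots> = 1/2 * ((deriv ^^ m) C1 0 + (deriv ^^ m) C2 0)"
    using \<open>C1 holomorphic_on S\<close> \<open>C2 holomorphic_on S\<close> \<open>open S\<close> \<open>0 \<in> S\<close>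
    by (simp only: higher_deriv_add)
  also have "\<dots> = (1/2) ^ Suc m * (poly (tanh_deriv_poly m) T + poly (tanh_deriv_poly m) (- T))"
    using higher_deriv_tanh_deriv_poly[OF \<open>open S\<close> C1' \<open>0 \<in> S\<close>]
      higher_deriv_tanh_deriv_poly[OF \<open>open S\<close> C2' \<open>0 \<in> S\<close>] C0
    by (simp add: distrib_left)
  finally show ?thesis .
qed

lemma alpha_eq_tanh_deriv_poly:
  fixes x T :: complex
  assumes "T\<^sup>2 = 1 - 2 / x" and "x \<noteq> 0"
  shows "alpha n x = (1/2) ^ (2 * n + 1) / fact (2 * n + 1) * poly (tanh_deriv_poly (2 * n + 1)) T"
proof -
  have "poly (tanh_deriv_poly (2 * n + 1)) (- T) = poly (tanh_deriv_poly (2 * n + 1)) T"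
    by (simp add: poly_tanh_deriv_poly_minus)
  then show ?thesis
    unfolding alpha_def higher_deriv_sinh_ratio_0[OF assms] by (simp add: field_simps)
qed

lemma deriv_alpha_nonzero:
  fixes x :: complex
  assumes "x \<noteq> 0" and "1 - 2 / x \<notin> \<real>\<^sub>\<le>\<^sub>0"
    and "poly (pderiv (tanh_deriv_poly (2 * n + 1))) (csqrt (1 - 2 / x)) \<noteq> 0"
  shows "deriv (alpha n) x \<noteq> 0"
proof -
  define c :: complex where "c = (1/2) ^ (2 * n + 1) / fact (2 * n + 1)"
  define P :: "complex poly" where "P = tanh_deriv_poly (2 * n + 1)"
  define s where "s = csqrt (1 - 2 / x)"
  define D where "D = c * (poly (pderiv P) s * (inverse (2 * s) * (2 / x\<^sup>2)))"
  have alpha: "alpha n y = c * poly P (csqrt (1 - 2 / y))" if "y \<noteq> 0" for y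
    using alpha_eq_tanh_deriv_poly[of "csqrt (1 - 2 / y)" y n] that by (simp add: c_def P_def)
  have "((\<lambda>y. 1 - 2 / y) has_field_derivative 2 / x\<^sup>2) (at x)"
    using assms(1) by (auto intro!: derivative_eq_intros simp: power2_eq_square field_simps)
  then have "((\<lambda>y. c * poly P (csqrt (1 - 2 / y))) has_field_derivative D) (at x)"
    unfolding D_def s_def
    by (intro DERIV_cmult DERIV_chain2[OF poly_DERIV] DERIV_chain2[OF has_field_derivative_csqrt] assms(2))
  then have "(alpha n has_field_derivative D) (at x)"
    using alpha assms(1)
    by (elim has_field_derivative_transform_within_open[where S = "- {0}"]) auto
  then have "deriv (alpha n) x = D"
    by (rule DERIV_imp_deriv)
  moreover have "s \<noteq> 0"
    using assms(2) by (auto simp: s_def)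
  moreover have "c \<noteq> 0"
    by (simp add: c_def del: fact_Suc)
  ultimately show ?thesis
    using assms(1,3) by (simp add: D_def P_def s_def)
qed

theorem propositionA1:
  fixes n :: nat and x :: complex
  assumes "x \<noteq> 0" and "alpha n x = 0"
  shows "x \<in> \<real> \<and> Re x > 2 \<and> deriv (alpha n) x \<noteq> 0"
proof -
  define s where "s = csqrt (1 - 2 / x)"
  have s2: "s\<^sup>2 = 1 - 2 / x"
    by (simp add: s_def)
  moreover have "(1/2) ^ (2 * n + 1) / fact (2 * n + 1) \<noteq> (0::complex)"
    by (simp del: fact_Suc)
  ultimately have root: "poly (tanh_deriv_poly (2 * n + 1)) s = 0"
    using alpha_eq_tanh_deriv_poly[OF s2 assms(1), of n] assms(2) by (simp del: fact_Suc)
  then obtain r where r: "s = of_real r"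
    using tanh_deriv_poly_complex_roots(1) Reals_cases by metis
  have r2: "of_real (r\<^sup>2) = 1 - 2 / x"
    using s2 by (simp add: r)
  have "r\<^sup>2 \<noteq> 1"
  proof
    assume "r\<^sup>2 = 1"
    with r2 have "2 / x = 0"
      by simp
    with assms(1) show False
      by simp
  qed
  moreover have "r \<noteq> 0" "\<bar>r\<bar> \<le> 1"
    using root poly_tanh_deriv_poly_0_nonzero[of "2 * n + 1"] tanh_deriv_poly_complex_roots(2)[OF root]
    by (auto simp: r)
  ultimately have "0 < r\<^sup>2" "r\<^sup>2 < 1"
    by (auto simp: abs_square_le_1 less_le)
  have "x = of_real (2 / (1 - r\<^sup>2))"
    using eq_two_div_one_minus_square[OF s2 assms(1)] by (simp add: r)
  then have "x \<in> \<real>" "Re x > 2"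
    using \<open>0 < r\<^sup>2\<close> \<open>r\<^sup>2 < 1\<close> by (auto simp: field_simps)
  moreover have "1 - 2 / x \<notin> \<real>\<^sub>\<le>\<^sub>0"
    using r2 \<open>0 < r\<^sup>2\<close> by (metis complex_nonpos_Reals_iff Re_complex_of_real Im_complex_of_real not_le)
  then have "deriv (alpha n) x \<noteq> 0"
    using deriv_alpha_nonzero assms(1) tanh_deriv_poly_complex_roots(3)[OF root] by (simp add: s_def)
  ultimately show ?thesis
    by blast
qed

end
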